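(* Let $P$ be an $n$-element poset, $L$ a labeling of $P$, and $x,y\in P$ with $y<_P x$. Fix $\gamma\in\{1,\ldots,n-2\}$ and suppose $L_\gamma(y)>L_\gamma(x)$. Then $L_\gamma(y)=L_{\gamma-1}(y)-1$ (i.e. $y$ is not in the promotion chain of $L_{\gamma-1}$), and moreover $L_{\gamma-1}(y)>L_{\gamma-1}(x)$.
   Context: A labeling of an $n$-element poset $P$ is a bijection $L:P\to[n]$. For a non-maximal $x\in P$, the $L$-successor of $x$ is the element $y>_P x$ with minimal label. The promotion chain of $L$ is $v_1<_P\cdots<_P v_m$ with $v_1=L^{-1}(1)$, $v_{i+1}$ the $L$-successor of $v_i$, and $v_m$ the first maximal element reached. Promotion: $\partial(L)(x)=L(x)-1$ if $x$ is not in the promotion chain; $\partial(L)(v_i)=L(v_{i+1})-1$ for $i<m$; $\partial(L)(v_m)=n$. Write $L_\gamma=\partial^\gamma(L)$, $L_0=L$. *)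

theory Defs
  imports Main
begin

definition strict_poset :: "'a set \<Rightarrow> ('a \<Rightarrow> 'a \<Rightarrow> bool) \<Rightarrow> bool" where
  "strict_poset P lt \<longleftrightarrow>
     (\<forall>x\<in>P. \<not> lt x x) \<and>
     (\<forall>x\<in>P. \<forall>y\<in>P. \<forall>z\<in>P. lt x y \<longrightarrow> lt y z \<longrightarrow> lt x z)"

definition labeling :: "'a set \<Rightarrow> ('a \<Rightarrow> nat) \<Rightarrow> bool" where
  "labeling P L \<longleftrightarrow> bij_betw L P {1..card P}"

definition is_maximal :: "'a set \<Rightarrow> ('a \<Rightarrow> 'a \<Rightarrow> bool) \<Rightarrow> 'a \<Rightarrow> bool" where
  "is_maximal P lt x \<longleftrightarrow> x \<in> P \<and> \<not> (\<exists>y\<in>P. lt x y)"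

definition successor :: "'a set \<Rightarrow> ('a \<Rightarrow> 'a \<Rightarrow> bool) \<Rightarrow> ('a \<Rightarrow> nat) \<Rightarrow> 'a \<Rightarrow> 'a" where
  "successor P lt L x =
     (THE y. y \<in> P \<and> lt x y \<and> (\<forall>z\<in>P. lt x z \<longrightarrow> L y \<le> L z))"

text \<open>The i-th element (0-based) of the iteration v1, succ v1, succ (succ v1), ...\<close>
definition chain_elem :: "'a set \<Rightarrow> ('a \<Rightarrow> 'a \<Rightarrow> bool) \<Rightarrow> ('a \<Rightarrow> nat) \<Rightarrow> nat \<Rightarrow> 'a" where
  "chain_elem P lt L i = (successor P lt L ^^ i) (the_inv_into P L 1)"

text \<open>The promotion chain: v1, ..., vm with vm the first maximal element reached.\<close>
definition promotion_chain :: "'a set \<Rightarrow> ('a \<Rightarrow> 'a \<Rightarrow> bool) \<Rightarrow> ('a \<Rightarrow> nat) \<Rightarrow> 'a set" where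
  "promotion_chain P lt L =
     {chain_elem P lt L i | i. \<forall>j<i. \<not> is_maximal P lt (chain_elem P lt L j)}"

definition promotion :: "'a set \<Rightarrow> ('a \<Rightarrow> 'a \<Rightarrow> bool) \<Rightarrow> ('a \<Rightarrow> nat) \<Rightarrow> ('a \<Rightarrow> nat)" where
  "promotion P lt L = (\<lambda>x.
     if x \<in> promotion_chain P lt L then
       (if is_maximal P lt x then card P else L (successor P lt L x) - 1)
     else L x - 1)"

end

theory Submission
  imports Defs
begin

text \<open>Promotion lowers every label by at most one: an element off the chain loses exactly one,
a chain element v takes the label of its successor minus one, and labels increase along the
chain because v is the label-minimal element above its predecessor, hence below anything
above v. So if y < x and promotion reverses them, y cannot be on the chain (its new label would
be at most the old label of x minus one), hence y lost exactly one and already had a larger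
label than x. Iterating needs that promotion again yields a labeling, which follows because the
chain is a finite strictly increasing sequence ending at a maximal element.\<close>

locale labeled_poset =
  fixes P :: "'a set" and lt :: "'a \<Rightarrow> 'a \<Rightarrow> bool" and L :: "'a \<Rightarrow> nat"
  assumes finite_P: "finite P" and poset: "strict_poset P lt" and labeling: "labeling P L"
    and nonempty: "P \<noteq> {}"
begin

lemma lt_irrefl: "x \<in> P \<Longrightarrow> \<not> lt x x"
  using poset unfolding strict_poset_def by blast

lemma lt_trans: "\<lbrakk>x \<in> P; y \<in> P; z \<in> P; lt x y; lt y z\<rbrakk> \<Longrightarrow> lt x z"
  using poset unfolding strict_poset_def by blast

lemma inj_on_L: "inj_on L P"
  using labeling unfolding labeling_def bij_betw_def by blast

lemma L_range: "x \<in> P \<Longrightarrow> L x \<in> {1..card P}"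
  using labeling unfolding labeling_def bij_betw_def by blast

lemma L_surj: "k \<in> {1..card P} \<Longrightarrow> \<exists>x\<in>P. L x = k"
  using labeling unfolding labeling_def bij_betw_def by (metis imageE)

lemma successor:
  assumes "x \<in> P" "\<not> is_maximal P lt x"
  shows "successor P lt L x \<in> P" "lt x (successor P lt L x)"
    "\<And>z. \<lbrakk>z \<in> P; lt x z\<rbrakk> \<Longrightarrow> L (successor P lt L x) \<le> L z"
proof -
  let ?S = "{z\<in>P. lt x z}"
  have "?S \<noteq> {}" "finite ?S"
    using assms finite_P unfolding is_maximal_def by auto
  then have "Min (L ` ?S) \<in> L ` ?S"
    by (intro Min_in) auto
  then obtain y where y: "y \<in> ?S" "L y = Min (L ` ?S)"
    by auto
  have y_min: "\<forall>z\<in>?S. L y \<le> L z"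
    using y \<open>finite ?S\<close> by simp
  have "successor P lt L x = y"
    unfolding successor_def
  proof (rule the_equality)
    show "y \<in> P \<and> lt x y \<and> (\<forall>z\<in>P. lt x z \<longrightarrow> L y \<le> L z)"
      using y y_min by simp
  next
    fix w assume w: "w \<in> P \<and> lt x w \<and> (\<forall>z\<in>P. lt x z \<longrightarrow> L w \<le> L z)"
    then have "L w \<le> L y" "L y \<le> L w"
      using y y_min by auto
    then show "w = y"
      using w y inj_onD[OF inj_on_L, of w y] by simp
  qed
  then show "successor P lt L x \<in> P" "lt x (successor P lt L x)"
    "\<And>z. \<lbrakk>z \<in> P; lt x z\<rbrakk> \<Longrightarrow> L (successor P lt L x) \<le> L z"
    using y y_min by auto
qed

abbreviation v :: "nat \<Rightarrow> 'a" where
  "v i \<equiv> chain_elem P lt L i"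

lemma v_0: "v 0 \<in> P" "L (v 0) = 1"
proof -
  have "1 \<in> {1..card P}"
    using finite_P nonempty by (simp add: Suc_leI card_gt_0_iff)
  then have "1 \<in> L ` P"
    using L_surj by force
  then show "v 0 \<in> P" "L (v 0) = 1"
    unfolding chain_elem_def using inj_on_L
    by (auto intro: the_inv_into_into f_the_inv_into_f)
qed

lemma v_Suc: "v (Suc i) = successor P lt L (v i)"
  by (simp add: chain_elem_def)

lemma L_ge_2:
  assumes "z \<in> P" "z \<noteq> v 0"
  shows "2 \<le> L z"
proof -
  have "L z \<noteq> 1"
    using assms v_0 inj_onD[OF inj_on_L, of z "v 0"] by auto
  then show ?thesis
    using L_range[OF assms(1)] by simp
qed

lemma v_in_P: "(\<forall>j<i. \<not> is_maximal P lt (v j)) \<Longrightarrow> v i \<in> P"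
  by (induction i) (auto simp: v_0 v_Suc successor)

lemma v_strict_mono:
  "\<lbrakk>i < j; \<forall>k<j. \<not> is_maximal P lt (v k)\<rbrakk> \<Longrightarrow> lt (v i) (v j)"
proof (induction j)
  case (Suc j)
  then have step: "v j \<in> P" "v (Suc j) \<in> P" "lt (v j) (v (Suc j))"
    using v_in_P[of j] successor[of "v j"] by (simp_all add: v_Suc)
  show ?case
  proof (cases "i = j")
    case False
    then have "lt (v i) (v j)" "v i \<in> P"
      using Suc v_in_P[of i] by simp_all
    then show ?thesis
      using step lt_trans[of "v i" "v j" "v (Suc j)"] by blast
  qed (use step in simp)
qed simp

lemma inj_on_v: "(\<forall>k<j. \<not> is_maximal P lt (v k)) \<Longrightarrow> inj_on v {..j}"
proof (rule inj_onI, rule ccontr)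
  fix i i' assume nonmax: "\<forall>k<j. \<not> is_maximal P lt (v k)"
    and "i \<in> {..j}" "i' \<in> {..j}" "v i = v i'" "i \<noteq> i'"
  then obtain a b where "a < b" "b \<le> j" "v a = v b"
    by (metis atMost_iff linorder_neqE_nat)
  then have "lt (v b) (v b)" "v b \<in> P"
    using nonmax v_strict_mono[of a b] v_in_P[of b] by auto
  then show False
    using lt_irrefl by blast
qed

lemma ex_maximal_v: "\<exists>i. is_maximal P lt (v i)"
proof (rule ccontr)
  assume "\<nexists>i. is_maximal P lt (v i)"
  then have "inj_on v {..card P}" "v ` {..card P} \<subseteq> P"
    using inj_on_v v_in_P by auto
  then have "card {..card P} \<le> card P"
    using card_inj_on_le finite_P by blast
  then show False by simp
qed

definition last_index :: nat where
  "last_index = (LEAST i. is_maximal P lt (v i))"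

lemma maximal_v_last: "is_maximal P lt (v last_index)"
  unfolding last_index_def by (rule LeastI_ex[OF ex_maximal_v])

lemma not_maximal_v: "j < last_index \<Longrightarrow> \<not> is_maximal P lt (v j)"
  unfolding last_index_def by (rule not_less_Least)

lemma promotion_chain_eq: "promotion_chain P lt L = v ` {..last_index}"
proof -
  have "(\<forall>j<i. \<not> is_maximal P lt (v j)) \<longleftrightarrow> i \<le> last_index" for i
  proof
    assume "\<forall>j<i. \<not> is_maximal P lt (v j)"
    then show "i \<le> last_index"
      using maximal_v_last by (metis not_le)
  qed (simp add: not_maximal_v)
  then show ?thesis
    unfolding promotion_chain_def by auto
qed

lemma v_in_P_last: "i \<le> last_index \<Longrightarrow> v i \<in> P"
  using v_in_P not_maximal_v by auto

lemma inj_on_v_last: "inj_on v {..last_index}"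
  using inj_on_v not_maximal_v by blast

lemma L_le_L_successor:
  assumes "x \<in> promotion_chain P lt L" "\<not> is_maximal P lt x"
  shows "L x \<le> L (successor P lt L x)"
proof -
  obtain j where j: "j \<le> last_index" "x = v j"
    using assms(1) promotion_chain_eq by auto
  have x: "x \<in> P" and s: "successor P lt L x \<in> P" "lt x (successor P lt L x)"
    using j v_in_P_last assms(2) successor by auto
  show ?thesis
  proof (cases j)
    case 0
    then show ?thesis using j v_0 L_range[OF s(1)] by simp
  next
    case (Suc i)
    then have i: "v i \<in> P" "\<not> is_maximal P lt (v i)" "x = successor P lt L (v i)"
      using j v_in_P_last not_maximal_v v_Suc by auto
    then have "lt (v i) (successor P lt L x)"
      using successor(2)[OF i(1,2)] s x lt_trans by blast
    then show ?thesis
      using successor(3)[OF i(1,2)] s i(3) by simp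
  qed
qed

lemma label_pred_le_promotion:
  assumes "z \<in> P"
  shows "L z - 1 \<le> promotion P lt L z"
  using L_range[OF assms] L_le_L_successor[of z] unfolding promotion_def by auto

lemma promotion_image: "promotion P lt L ` P = {1..card P}"
proof (intro equalityI subsetI)
  fix k assume "k \<in> promotion P lt L ` P"
  then obtain z where z: "z \<in> P" "k = promotion P lt L z" by auto
  show "k \<in> {1..card P}"
  proof (cases "z \<in> promotion_chain P lt L")
    case on_chain: True
    then obtain i where i: "i \<le> last_index" "z = v i"
      using promotion_chain_eq by auto
    show ?thesis
    proof (cases "i = last_index")
      case True
      then have "k = card P"
        using z i on_chain maximal_v_last by (simp add: promotion_def)
      then show ?thesis
        using finite_P nonempty by (simp add: Suc_leI card_gt_0_iff)
    next
      case False
      then have si: "Suc i \<le> last_index"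
        using i by simp
      then have "v (Suc i) \<in> P" "v (Suc i) \<noteq> v 0"
        using v_in_P_last inj_onD[OF inj_on_v_last, of "Suc i" 0] by auto
      moreover have "k = L (v (Suc i)) - 1"
        using z i on_chain not_maximal_v si by (simp add: promotion_def v_Suc)
      ultimately show ?thesis
        using L_range L_ge_2 by fastforce
    qed
  next
    case False
    then have "z \<noteq> v 0" using promotion_chain_eq by auto
    then show ?thesis
      using z False L_range[OF z(1)] L_ge_2[OF z(1)] unfolding promotion_def by auto
  qed
next
  fix k assume k: "k \<in> {1..card P}"
  show "k \<in> promotion P lt L ` P"
  proof (cases "k = card P")
    case True
    then have "promotion P lt L (v last_index) = k"
      using maximal_v_last promotion_chain_eq by (simp add: promotion_def)
    then show ?thesis using v_in_P_last by force
  next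
    case False
    then obtain z where z: "z \<in> P" "L z = k + 1"
      using k L_surj[of "k + 1"] by auto
    show ?thesis
    proof (cases "z \<in> promotion_chain P lt L")
      case True
      then obtain j where j: "j \<le> last_index" "z = v j"
        using promotion_chain_eq by auto
      then obtain i where i: "j = Suc i"
        using z k v_0 by (cases j) auto
      then have "v i \<in> promotion_chain P lt L" "promotion P lt L (v i) = k"
        using j z not_maximal_v[of i] promotion_chain_eq by (auto simp: promotion_def v_Suc)
      then show ?thesis using i j v_in_P_last by force
    next
      case False
      then show ?thesis using z by (force simp: promotion_def)
    qed
  qed
qed

lemma labeling_promotion: "labeling P (promotion P lt L)"
  using promotion_image finite_P eq_card_imp_inj_on[of P "promotion P lt L"]
  unfolding labeling_def bij_betw_def by simp

lemma promotion_inversion: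
  assumes x: "x \<in> P" and y: "y \<in> P" and "lt y x"
    and inv: "promotion P lt L x < promotion P lt L y"
  shows "y \<notin> promotion_chain P lt L" and "L x < L y"
proof -
  have "\<not> is_maximal P lt y"
    using x \<open>lt y x\<close> unfolding is_maximal_def by blast
  then have "promotion P lt L y \<le> L x - 1" if "y \<in> promotion_chain P lt L"
    using that successor(3)[OF y _ x \<open>lt y x\<close>] by (simp add: promotion_def diff_le_mono)
  then show y_off_chain: "y \<notin> promotion_chain P lt L"
    using inv label_pred_le_promotion[OF x] by fastforce
  show "L x < L y"
    using inv label_pred_le_promotion[OF x] y_off_chain by (simp add: promotion_def)
qed

end

lemma labeling_funpow_promotion:
  assumes "finite P" "strict_poset P lt" "labeling P L" "P \<noteq> {}"
  shows "labeling P ((promotion P lt ^^ k) L)"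
proof (induction k)
  case (Suc k)
  interpret labeled_poset P lt "(promotion P lt ^^ k) L"
    using assms Suc.IH by unfold_locales
  show ?case using labeling_promotion by simp
qed (use assms in simp)

theorem mainTheorem2:
  fixes P :: "'a set" and lt :: "'a \<Rightarrow> 'a \<Rightarrow> bool" and L :: "'a \<Rightarrow> nat"
    and n :: nat and x y :: 'a and \<gamma> :: nat
  assumes "finite P" and "strict_poset P lt" and "card P = n"
    and "labeling P L"
    and "x \<in> P" and "y \<in> P" and "lt y x"
    and "1 \<le> \<gamma>" and "\<gamma> \<le> n - 2"
    and "(promotion P lt ^^ \<gamma>) L y > (promotion P lt ^^ \<gamma>) L x"
  shows "(promotion P lt ^^ \<gamma>) L y = (promotion P lt ^^ (\<gamma> - 1)) L y - 1
    \<and> y \<notin> promotion_chain P lt ((promotion P lt ^^ (\<gamma> - 1)) L)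
    \<and> (promotion P lt ^^ (\<gamma> - 1)) L y > (promotion P lt ^^ (\<gamma> - 1)) L x"
proof -
  define M where "M = (promotion P lt ^^ (\<gamma> - 1)) L"
  have step: "(promotion P lt ^^ \<gamma>) L = promotion P lt M"
    using \<open>1 \<le> \<gamma>\<close> unfolding M_def by (cases \<gamma>) auto
  interpret labeled_poset P lt M
    using assms labeling_funpow_promotion unfolding M_def by unfold_locales auto
  have "y \<notin> promotion_chain P lt M" "M x < M y"
    using promotion_inversion assms(5-7,10) unfolding step by blast+
  then show ?thesis
    unfolding step M_def[symmetric] by (simp add: promotion_def)
qed

end
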